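(* Suppose $\mathrm{char}(k)\ne 2$ ($k$ algebraically closed). Let $(V,q)$ be a non-degenerate quadratic space and let $(W,q')$ be a quadratic space of dimension at most $\aleph_0$. Then there is an embedding $W\to V$, i.e. a $k$-linear map $\phi:W\to V$ with $q\circ\phi=q'$.
   Context: A quadratic space is a $k$-vector space $V$ together with $q\in P_2(V)$, a degree-$2$ polynomial function on $V$ (in dual coordinates $x_i$ to a basis, a formal, possibly infinite, $k$-linear combination of degree-$2$ monomials). The strength of $q$ is the least $s$ with $q=\sum_{i=1}^s g_ih_i$ for linear forms $g_i,h_i\in P_1(V)$ ($\infty$ if none exists); $(V,q)$ is non-degenerate if $q$ has infinite strength. *)

theory Defs
  imports Main "HOL-Computational_Algebra.Polynomial" "HOL-Library.Extended_Nat"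
begin

definition alg_closed :: "'k::field itself \<Rightarrow> bool" where
  "alg_closed _ \<longleftrightarrow> (\<forall>p :: 'k poly. degree p > 0 \<longrightarrow> (\<exists>x. poly p x = 0))"

definition linear_form :: "('k::field \<Rightarrow> 'v::ab_group_add \<Rightarrow> 'v) \<Rightarrow> ('v \<Rightarrow> 'k) \<Rightarrow> bool" where
  "linear_form scale g \<longleftrightarrow> Vector_Spaces.linear scale ((*) :: 'k \<Rightarrow> 'k \<Rightarrow> 'k) g"

text \<open>Degree-2 polynomial functions P_2(V): q(v) = B(v,v) for a bilinear form B
  (equivalently, a formal possibly infinite linear combination of degree-2 monomials
  in dual coordinates to a basis).\<close>
definition is_P2 :: "('k::field \<Rightarrow> 'v::ab_group_add \<Rightarrow> 'v) \<Rightarrow> ('v \<Rightarrow> 'k) \<Rightarrow> bool" where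
  "is_P2 scale q \<longleftrightarrow> (\<exists>B :: 'v \<Rightarrow> 'v \<Rightarrow> 'k.
      (\<forall>w. linear_form scale (\<lambda>v. B v w)) \<and> (\<forall>v. linear_form scale (B v)) \<and>
      (\<forall>v. q v = B v v))"

definition quadratic_space :: "('k::field \<Rightarrow> 'v::ab_group_add \<Rightarrow> 'v) \<Rightarrow> ('v \<Rightarrow> 'k) \<Rightarrow> bool" where
  "quadratic_space scale q \<longleftrightarrow> vector_space scale \<and> is_P2 scale q"

definition strength_le :: "('k::field \<Rightarrow> 'v::ab_group_add \<Rightarrow> 'v) \<Rightarrow> ('v \<Rightarrow> 'k) \<Rightarrow> nat \<Rightarrow> bool" where
  "strength_le scale q s \<longleftrightarrow> (\<exists>g h :: nat \<Rightarrow> 'v \<Rightarrow> 'k.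
      (\<forall>i<s. linear_form scale (g i) \<and> linear_form scale (h i)) \<and>
      q = (\<lambda>v. \<Sum>i<s. g i v * h i v))"

definition strength :: "('k::field \<Rightarrow> 'v::ab_group_add \<Rightarrow> 'v) \<Rightarrow> ('v \<Rightarrow> 'k) \<Rightarrow> enat" where
  "strength scale q = (if \<exists>s. strength_le scale q s then enat (LEAST s. strength_le scale q s) else \<infinity>)"

definition nondegenerate :: "('k::field \<Rightarrow> 'v::ab_group_add \<Rightarrow> 'v) \<Rightarrow> ('v \<Rightarrow> 'k) \<Rightarrow> bool" where
  "nondegenerate scale q \<longleftrightarrow> strength scale q = \<infinity>"

definition dim_le_aleph0 :: "('k::field \<Rightarrow> 'v::ab_group_add \<Rightarrow> 'v) \<Rightarrow> bool" where
  "dim_le_aleph0 scale \<longleftrightarrow> (\<exists>B. countable B \<and> \<not> module.dependent scale B \<and> module.span scale B = UNIV)"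

end

theory Submission
  imports Defs
begin

text \<open>
  Since \<open>2 \<noteq> 0\<close>, both quadratic forms come from symmetric bilinear forms.
  Non-degeneracy of \<open>q\<close> yields an infinite orthonormal sequence \<open>e\<^sub>0, e\<^sub>1, \<dots>\<close> in \<open>V\<close>:
  if every vector orthogonal to \<open>e\<^sub>0, \<dots>, e\<^sub>n\<^sub>-\<^sub>1\<close> were isotropic, then
  \<open>q = \<Sum>\<^sub>i<\<^sub>n b(e\<^sub>i,-)\<^sup>2\<close> would have strength at most \<open>n\<close>; square roots normalise.
  Any symmetric \<open>\<nat> \<times> \<nat>\<close> matrix \<open>c\<close> is then the Gram matrix of a sequence \<open>v\<^sub>i\<close> with
  \<open>v\<^sub>i \<in> span {e\<^sub>0, \<dots>, e\<^sub>2\<^sub>i\<^sub>+\<^sub>1}\<close>: the off-diagonal conditions on \<open>v\<^sub>n\<close> form a triangular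
  linear system, solved in \<open>span {e\<^sub>0, \<dots>, e\<^sub>2\<^sub>n\<^sub>-\<^sub>1}\<close>, and the diagonal one is met by adding
  \<open>s e\<^sub>2\<^sub>n + t e\<^sub>2\<^sub>n\<^sub>+\<^sub>1\<close> with \<open>s\<^sup>2 + t\<^sup>2\<close> prescribed and \<open>(s,t) \<noteq> 0\<close>, possible because
  \<open>k\<close> is algebraically closed. Sending a countable basis of \<open>W\<close> to the sequence realising
  its Gram matrix and extending linearly gives the embedding.
\<close>

lemma choice_from_prefixes:
  assumes "G 0 init"
    and step: "\<And>n f. G n f \<Longrightarrow> \<exists>x. G (Suc n) (f(n := x))"
    and prefix: "\<And>n f g. (\<And>i. i < n \<Longrightarrow> f i = g i) \<Longrightarrow> G n f \<Longrightarrow> G n g"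
  shows "\<exists>f. \<forall>n. G n f"
proof -
  define S where "S = rec_nat init (\<lambda>n f. f(n := SOME x. G (Suc n) (f(n := x))))"
  have S_Suc: "S (Suc n) = (S n)(n := SOME x. G (Suc n) ((S n)(n := x)))" for n
    by (simp add: S_def)
  have G_S: "G n (S n)" for n
  proof (induction n)
    case 0
    then show ?case using \<open>G 0 init\<close> by (simp add: S_def)
  next
    case (Suc n)
    show ?case unfolding S_Suc by (rule someI_ex) (rule step[OF Suc])
  qed
  have S_stable: "S n i = S (Suc i) i" if "i < n" for i n
    using that by (induction n) (auto simp: S_Suc less_Suc_eq)
  have "G n (\<lambda>i. S (Suc i) i)" for n
    by (rule prefix[OF _ G_S]) (erule S_stable)
  then show ?thesis by blast
qed

lemma alg_closed_imp_square_root: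
  assumes "alg_closed TYPE('k::field)"
  shows "\<exists>r. r * r = (a :: 'k)"
proof -
  have "degree [:-a, 0, 1:] > 0" by simp
  then obtain r where "poly [:-a, 0, 1:] r = 0"
    using assms unfolding alg_closed_def by blast
  then have "r * r = a" by (simp add: algebra_simps)
  then show ?thesis by blast
qed

lemma sum_two_squares_nontrivial:
  fixes d :: "'k::field"
  assumes sqrt: "\<And>a::'k. \<exists>r. r * r = a"
  obtains s t where "s * s + t * t = d" "s \<noteq> 0 \<or> t \<noteq> 0"
proof (cases "d = 0")
  case True
  obtain i where "i * i = (-1 :: 'k)" using sqrt by blast
  then show ?thesis using that[of 1 i] True by simp
next
  case False
  obtain r where "r * r = d" using sqrt by blast
  then show ?thesis using that[of r 0] False by auto
qed

lemma vector_space_field_self: "vector_space ((*) :: 'k::field \<Rightarrow> 'k \<Rightarrow> 'k)"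
  unfolding vector_space_def by (simp add: algebra_simps)

primrec orth_residual ::
  "('k::field \<Rightarrow> 'v::ab_group_add \<Rightarrow> 'v) \<Rightarrow> ('v \<Rightarrow> 'v \<Rightarrow> 'k) \<Rightarrow> (nat \<Rightarrow> 'v) \<Rightarrow> nat \<Rightarrow> 'v \<Rightarrow> 'v"
where
  "orth_residual scale b e 0 x = x"
| "orth_residual scale b e (Suc n) x = orth_residual scale b e n x - scale (b (e n) x) (e n)"

locale sym_bilinear = vector_space scale
  for scale :: "'k::field \<Rightarrow> 'v::ab_group_add \<Rightarrow> 'v" (infixr \<open>*v\<close> 75) +
  fixes b :: "'v \<Rightarrow> 'v \<Rightarrow> 'k"
  assumes b_add: "b x (y + z) = b x y + b x z"
    and b_scale: "b x (a *v y) = a * b x y"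
    and b_sym: "b x y = b y x"
begin

lemma b_add_left: "b (x + y) z = b x z + b y z"
  by (metis b_add b_sym)

lemma b_scale_left: "b (a *v x) z = a * b x z"
  by (metis b_scale b_sym)

lemma linear_form_b: "linear_form scale (b u)"
  unfolding linear_form_def Vector_Spaces.linear_iff
  using vector_space_field_self vector_space_axioms by (simp add: b_add b_scale)

lemma b_diff: "b x (y - z) = b x y - b x z" "b (y - z) x = b y x - b z x"
proof -
  interpret form: Vector_Spaces.linear scale "(*)" "b x"
    using linear_form_b unfolding linear_form_def .
  show "b x (y - z) = b x y - b x z" by (rule form.diff)
  then show "b (y - z) x = b y x - b z x" by (metis b_sym)
qed

lemma b_zero [simp]: "b x 0 = 0" "b 0 x = 0"
  using b_scale[of x 0 0] b_scale_left[of 0 0 x] by simp_all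

lemmas b_simps = b_add b_add_left b_scale b_scale_left b_diff

definition orthonormal_upto :: "nat \<Rightarrow> (nat \<Rightarrow> 'v) \<Rightarrow> bool" where
  "orthonormal_upto n e \<longleftrightarrow> (\<forall>i<n. \<forall>j<n. b (e i) (e j) = (if i = j then 1 else 0))"

lemma orth_residual_orthogonal:
  assumes "orthonormal_upto N e" "n \<le> N" "j < N"
  shows "b (e j) (orth_residual scale b e n x) = (if j < n then 0 else b (e j) x)"
  using assms(2)
proof (induction n)
  case 0
  then show ?case by simp
next
  case (Suc n)
  have "b (e j) (e n) = (if j = n then 1 else 0)"
    using assms Suc.prems unfolding orthonormal_upto_def by auto
  then show ?case using Suc by (cases "j = n") (auto simp: b_diff b_scale)
qed

lemma orth_residual_square:
  assumes "orthonormal_upto N e" "n \<le> N"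
  shows "b x x = b (orth_residual scale b e n x) (orth_residual scale b e n x)
                 + (\<Sum>i<n. b (e i) x * b (e i) x)"
  using assms(2)
proof (induction n)
  case 0
  then show ?case by simp
next
  case (Suc n)
  let ?p = "orth_residual scale b e n x" and ?t = "b (e n) x"
  have "b (e n) ?p = ?t" "b ?p (e n) = ?t"
    using orth_residual_orthogonal[OF assms(1), of n n x] Suc.prems b_sym[of ?p] by simp_all
  moreover have "b (e n) (e n) = 1"
    using assms Suc.prems unfolding orthonormal_upto_def by auto
  ultimately have "b (orth_residual scale b e (Suc n) x) (orth_residual scale b e (Suc n) x)
      = b ?p ?p - ?t * ?t"
    by (simp add: b_diff b_scale b_scale_left algebra_simps)
  then show ?case using Suc by simp
qed

lemma strength_le_if_orthogonal_isotropic: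
  assumes "orthonormal_upto n e"
    and isotropic: "\<And>x. \<forall>i<n. b (e i) x = 0 \<Longrightarrow> b x x = 0"
  shows "strength_le scale (\<lambda>x. b x x) n"
  unfolding strength_le_def
proof (intro exI[of _ "\<lambda>i. b (e i)"] conjI allI impI)
  show "linear_form scale (b (e i))" "linear_form scale (b (e i))" for i
    by (rule linear_form_b)+
  show "(\<lambda>x. b x x) = (\<lambda>v. \<Sum>i<n. b (e i) v * b (e i) v)"
  proof
    fix x
    have "b (orth_residual scale b e n x) (orth_residual scale b e n x) = 0"
      using isotropic orth_residual_orthogonal[OF assms(1), of n _ x] by simp
    then show "b x x = (\<Sum>i<n. b (e i) x * b (e i) x)"
      using orth_residual_square[OF assms(1), of n x] by simp
  qed
qed

lemma orthonormal_seq_if_infinite_strength: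
  assumes sqrt: "\<And>a::'k. \<exists>r. r * r = a"
    and infinite: "\<And>n. \<not> strength_le scale (\<lambda>x. b x x) n"
  shows "\<exists>e::nat \<Rightarrow> 'v. \<forall>i j. b (e i) (e j) = (if i = j then 1 else 0)"
proof -
  have "\<exists>e. \<forall>n. orthonormal_upto n e"
  proof (rule choice_from_prefixes)
    show "orthonormal_upto 0 (\<lambda>_. 0)" by (simp add: orthonormal_upto_def)
  next
    fix n e
    assume e: "orthonormal_upto n e"
    obtain x where x: "\<forall>i<n. b (e i) x = 0" "b x x \<noteq> 0"
      using strength_le_if_orthogonal_isotropic[OF e] infinite by blast
    obtain r where r: "r * r = b x x" using sqrt by blast
    with x have "r \<noteq> 0" by (metis mult_zero_left)
    define u where "u = (1 / r) *v x"
    have "b u u = 1" using r x(2) \<open>r \<noteq> 0\<close> by (simp add: u_def b_simps field_simps)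
    moreover have "b (e i) u = 0" "b u (e i) = 0" if "i < n" for i
    proof -
      show "b (e i) u = 0" using x that by (simp add: u_def b_simps)
      then show "b u (e i) = 0" by (metis b_sym)
    qed
    ultimately have "orthonormal_upto (Suc n) (e(n := u))"
      using e unfolding orthonormal_upto_def by (auto simp: less_Suc_eq)
    then show "\<exists>u. orthonormal_upto (Suc n) (e(n := u))" by blast
  qed (simp add: orthonormal_upto_def)
  then obtain e where e: "\<forall>n. orthonormal_upto n e" by blast
  have "b (e i) (e j) = (if i = j then 1 else 0)" for i j
    using e[rule_format, of "Suc (max i j)"] by (simp add: orthonormal_upto_def)
  then show ?thesis by blast
qed

text \<open>
  \<open>b (v i) (e k) = 0\<close> for \<open>k \<ge> 2i + 2\<close> expresses \<open>v\<^sub>i \<in> span {e\<^sub>0, \<dots>, e\<^sub>2\<^sub>i\<^sub>+\<^sub>1}\<close>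
  without mentioning spans; the pivot condition makes the equations
  \<open>b (v m) y = a m\<close>, \<open>m < n\<close>, triangular.
\<close>
definition gram_prefix :: "(nat \<Rightarrow> nat \<Rightarrow> 'k) \<Rightarrow> (nat \<Rightarrow> 'v) \<Rightarrow> nat \<Rightarrow> (nat \<Rightarrow> 'v) \<Rightarrow> bool" where
  "gram_prefix c e n v \<longleftrightarrow>
     (\<forall>i<n. \<forall>j<n. b (v i) (v j) = c i j) \<and>
     (\<forall>i<n. \<forall>k. 2 * i + 2 \<le> k \<longrightarrow> b (v i) (e k) = 0) \<and>
     (\<forall>i<n. b (v i) (e (2 * i)) \<noteq> 0 \<or> b (v i) (e (2 * i + 1)) \<noteq> 0)"

lemma gram_prefix_solve:
  assumes e: "\<And>i j. b (e i) (e j) = (if i = j then 1 else 0)"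
    and v: "gram_prefix c e n v" and "M \<le> n"
  shows "\<exists>y. (\<forall>m<M. b (v m) y = a m) \<and> (\<forall>k. 2 * M \<le> k \<longrightarrow> b y (e k) = 0)"
  using \<open>M \<le> n\<close>
proof (induction M)
  case 0
  show ?case by (rule exI[of _ 0]) simp
next
  case (Suc M)
  then obtain y where y: "\<forall>m<M. b (v m) y = a m" "\<forall>k. 2 * M \<le> k \<longrightarrow> b y (e k) = 0"
    by auto
  have "M < n" using Suc by simp
  define p where "p = b (v M) (e (2 * M))"
  define p' where "p' = b (v M) (e (2 * M + 1))"
  have "p \<noteq> 0 \<or> p' \<noteq> 0" using v \<open>M < n\<close> unfolding gram_prefix_def p_def p'_def by auto
  then obtain s t where st: "s * p + t * p' = a M - b (v M) y"
    by (metis add_0 add_0_right eq_divide_eq mult_zero_left)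
  define y' where "y' = y + s *v e (2 * M) + t *v e (2 * M + 1)"
  have "b (v m) y' = a m" if "m < Suc M" for m
  proof (cases "m = M")
    case True
    have "b (v M) y' = b (v M) y + (s * p + t * p')"
      by (simp add: y'_def b_add b_scale p_def p'_def add.assoc)
    then show ?thesis using st True by simp
  next
    case False
    then have "m < M" using that by simp
    with v \<open>M < n\<close> have "b (v m) (e (2 * M)) = 0" "b (v m) (e (2 * M + 1)) = 0"
      unfolding gram_prefix_def by auto
    then show ?thesis using y \<open>m < M\<close> by (simp add: y'_def b_simps)
  qed
  moreover have "b y' (e k) = 0" if "2 * Suc M \<le> k" for k
    using y e that by (simp add: y'_def b_simps)
  ultimately show ?case by blast
qed

lemma gram_prefix_extend:
  fixes c :: "nat \<Rightarrow> nat \<Rightarrow> 'k" and e :: "nat \<Rightarrow> 'v"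
  assumes sqrt: "\<And>a::'k. \<exists>r. r * r = a"
    and e: "\<And>i j. b (e i) (e j) = (if i = j then 1 else 0)"
    and c_sym: "\<And>i j. c i j = c j i"
    and v: "gram_prefix c e n v"
  shows "\<exists>x. gram_prefix c e (Suc n) (v(n := x))"
proof -
  obtain y where y: "\<forall>m<n. b (v m) y = c m n" "\<forall>k. 2 * n \<le> k \<longrightarrow> b y (e k) = 0"
    using gram_prefix_solve[OF e v order_refl, where a = "\<lambda>m. c m n"] by blast
  obtain s t where st: "s * s + t * t = c n n - b y y" "s \<noteq> 0 \<or> t \<noteq> 0"
    by (rule sum_two_squares_nontrivial[OF sqrt])
  define x where "x = y + s *v e (2 * n) + t *v e (2 * n + 1)"
  have y_perp: "b y (e (2 * n)) = 0" "b y (e (2 * n + 1)) = 0"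
    "b (e (2 * n)) y = 0" "b (e (2 * n + 1)) y = 0"
    using y(2) b_sym[of y "e (2 * n)"] b_sym[of y "e (2 * n + 1)"] by simp_all
  have "b (v m) x = c m n" "b x (v m) = c n m" if "m < n" for m
  proof -
    have "b (v m) (e (2 * n)) = 0" "b (v m) (e (2 * n + 1)) = 0"
      using v that unfolding gram_prefix_def by auto
    then show "b (v m) x = c m n" using y that by (simp add: x_def b_simps)
    then show "b x (v m) = c n m" using b_sym c_sym by metis
  qed
  moreover have "b x (e k) = 0" if "2 * n + 2 \<le> k" for k
    using y e that by (simp add: x_def b_simps)
  moreover have "b x (e (2 * n)) = s" "b x (e (2 * n + 1)) = t"
    using y_perp e by (simp_all add: x_def b_simps)
  moreover have "b x x = c n n"
    using y_perp e st by (simp add: x_def b_add b_add_left b_scale b_scale_left ac_simps)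
  ultimately have "gram_prefix c e (Suc n) (v(n := x))"
    using v st(2) unfolding gram_prefix_def by (auto simp: less_Suc_eq)
  then show ?thesis by blast
qed

lemma gram_matrix_realizable:
  fixes c :: "nat \<Rightarrow> nat \<Rightarrow> 'k" and e :: "nat \<Rightarrow> 'v"
  assumes sqrt: "\<And>a::'k. \<exists>r. r * r = a"
    and e: "\<And>i j. b (e i) (e j) = (if i = j then 1 else 0)"
    and c_sym: "\<And>i j. c i j = c j i"
  shows "\<exists>v. \<forall>i j. b (v i) (v j) = c i j"
proof -
  have "\<exists>v. \<forall>n. gram_prefix c e n v"
  proof (rule choice_from_prefixes)
    show "gram_prefix c e 0 (\<lambda>_. 0)" by (simp add: gram_prefix_def)
  next
    show "\<exists>x. gram_prefix c e (Suc n) (v(n := x))" if "gram_prefix c e n v" for n v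
      using gram_prefix_extend[OF sqrt e c_sym that] .
  qed (simp add: gram_prefix_def)
  then obtain v where v: "\<forall>n. gram_prefix c e n v" by blast
  have "b (v i) (v j) = c i j" for i j
    using v[rule_format, of "Suc (max i j)"] by (simp add: gram_prefix_def)
  then show ?thesis by blast
qed

end

lemma quadratic_space_sym_bilinear:
  fixes scale :: "'k::field \<Rightarrow> 'v::ab_group_add \<Rightarrow> 'v"
  assumes "quadratic_space scale q" "(2::'k) \<noteq> 0"
  shows "\<exists>b. sym_bilinear scale b \<and> (\<forall>x. q x = b x x)"
proof -
  obtain B :: "'v \<Rightarrow> 'v \<Rightarrow> 'k" where left: "\<And>w. linear_form scale (\<lambda>v. B v w)"
    and right: "\<And>v. linear_form scale (B v)" and q: "\<And>v. q v = B v v"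
    using assms(1) unfolding quadratic_space_def is_P2_def by blast
  have "B (x + y) w = B x w + B y w" "B (scale c x) w = c * B x w"
    "B w (x + y) = B w x + B w y" "B w (scale c x) = c * B w x" for x y w c
    using left[of w] right[of w] unfolding linear_form_def Vector_Spaces.linear_iff by auto
  then have "sym_bilinear scale (\<lambda>x y. (B x y + B y x) / 2)"
    using assms(1) unfolding sym_bilinear_def sym_bilinear_axioms_def quadratic_space_def
    by (simp add: add_divide_distrib algebra_simps)
  moreover have "q x = (B x x + B x x) / 2" for x
    using assms(2) q by (simp add: field_simps)
  ultimately show ?thesis by blast
qed

lemma linear_preserves_sym_bilinear_on_span:
  assumes "sym_bilinear scaleW bW" "sym_bilinear scaleV bV"
    and \<phi>: "Vector_Spaces.linear scaleW scaleV \<phi>"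
    and on_S: "\<And>u u'. u \<in> S \<Longrightarrow> u' \<in> S \<Longrightarrow> bV (\<phi> u) (\<phi> u') = bW u u'"
    and "w \<in> module.span scaleW S" "w' \<in> module.span scaleW S"
  shows "bV (\<phi> w) (\<phi> w') = bW w w'"
proof -
  interpret W: sym_bilinear scaleW bW by fact
  interpret V: sym_bilinear scaleV bV by fact
  have \<phi>_add: "\<phi> (x + y) = \<phi> x + \<phi> y" and \<phi>_scale: "\<phi> (scaleW a x) = scaleV a (\<phi> x)" for x y a
    using \<phi> unfolding Vector_Spaces.linear_iff by auto
  have \<phi>_0: "\<phi> 0 = 0" using \<phi>_scale[of 0 0] by simp
  have left: "bV (\<phi> w) (\<phi> u) = bW w u" if "u \<in> S" for u
    using \<open>w \<in> W.span S\<close>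
  proof (induction rule: W.span_induct_alt)
    case base
    then show ?case by (simp add: \<phi>_0)
  next
    case (step a x y)
    then show ?case using on_S[OF step(1) that] by (simp add: \<phi>_add \<phi>_scale V.b_simps W.b_simps)
  qed
  show ?thesis
    using \<open>w' \<in> W.span S\<close>
  proof (induction rule: W.span_induct_alt)
    case base
    then show ?case by (simp add: \<phi>_0)
  next
    case (step a x y)
    then show ?case using left[OF step(1)] by (simp add: \<phi>_add \<phi>_scale V.b_simps W.b_simps)
  qed
qed

lemma countable_basis_isometry:
  assumes W: "sym_bilinear scaleW bW" and V: "sym_bilinear scaleV bV"
    and basis: "countable B" "\<not> module.dependent scaleW B" "module.span scaleW B = UNIV"
    and gram: "\<And>i j. bV (v i) (v j) = bW (from_nat_into B i) (from_nat_into B j)"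
  shows "\<exists>\<phi>. Vector_Spaces.linear scaleW scaleV \<phi> \<and> (\<forall>w w'. bV (\<phi> w) (\<phi> w') = bW w w')"
proof -
  interpret vector_space_pair scaleW scaleV
    using W V unfolding sym_bilinear_def vector_space_pair_def by blast
  define \<phi> where "\<phi> = construct B (\<lambda>u. v (to_nat_on B u))"
  have lin: "Vector_Spaces.linear scaleW scaleV \<phi>"
    unfolding \<phi>_def by (rule linear_construct[OF basis(2)])
  have "bV (\<phi> u) (\<phi> u') = bW u u'" if "u \<in> B" "u' \<in> B" for u u'
    using that basis(1) by (simp add: \<phi>_def construct_basis[OF basis(2)] gram)
  then have "bV (\<phi> w) (\<phi> w') = bW w w'" for w w'
    using linear_preserves_sym_bilinear_on_span[OF W V lin] basis(3) by blast
  with lin show ?thesis by blast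
qed

theorem proposition2p4:
  fixes scaleV :: "'k::field \<Rightarrow> 'v::ab_group_add \<Rightarrow> 'v" and q :: "'v \<Rightarrow> 'k"
    and scaleW :: "'k \<Rightarrow> 'w::ab_group_add \<Rightarrow> 'w" and q' :: "'w \<Rightarrow> 'k"
  assumes "alg_closed TYPE('k)"
    and "(2::'k) \<noteq> 0"
    and "quadratic_space scaleV q" and "nondegenerate scaleV q"
    and "quadratic_space scaleW q'" and "dim_le_aleph0 scaleW"
  shows "\<exists>\<phi>. Vector_Spaces.linear scaleW scaleV \<phi> \<and> q \<circ> \<phi> = q'"
proof -
  note sqrt = alg_closed_imp_square_root[OF assms(1)]
  obtain bV where V: "sym_bilinear scaleV bV" and qV: "\<And>x. q x = bV x x"
    using quadratic_space_sym_bilinear[OF assms(3,2)] by blast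
  obtain bW where W: "sym_bilinear scaleW bW" and qW: "\<And>x. q' x = bW x x"
    using quadratic_space_sym_bilinear[OF assms(5,2)] by blast
  interpret V: sym_bilinear scaleV bV by (rule V)
  have "q = (\<lambda>x. bV x x)" using qV by blast
  then have infinite: "\<not> strength_le scaleV (\<lambda>x. bV x x) n" for n
    using assms(4) unfolding nondegenerate_def strength_def by (auto split: if_splits)
  obtain e :: "nat \<Rightarrow> 'v" where e: "\<And>i j. bV (e i) (e j) = (if i = j then 1 else 0)"
    using V.orthonormal_seq_if_infinite_strength[OF sqrt infinite] by blast
  obtain B where B: "countable B" "\<not> module.dependent scaleW B" "module.span scaleW B = UNIV"
    using assms(6) unfolding dim_le_aleph0_def by blast
  obtain v where "\<And>i j. bV (v i) (v j) = bW (from_nat_into B i) (from_nat_into B j)"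
    using V.gram_matrix_realizable[OF sqrt e, of "\<lambda>i j. bW (from_nat_into B i) (from_nat_into B j)"]
      sym_bilinear.b_sym[OF W] by blast
  then obtain \<phi> where "Vector_Spaces.linear scaleW scaleV \<phi>" "\<And>w. bV (\<phi> w) (\<phi> w) = bW w w"
    using countable_basis_isometry[OF W V B] by blast
  moreover from this(2) have "q \<circ> \<phi> = q'" by (simp add: fun_eq_iff qV qW)
  ultimately show ?thesis by blast
qed

end
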